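(* Let $\kappa$ be a regular infinite cardinal, let $\mathscr{F},\mathscr{G}\subseteq[\kappa]^\kappa$, and let $\Pi=\{I_\alpha:\alpha<\kappa\}$ be an interval partition of $\kappa$. Then at least one of the following holds: (a) $\mathscr{F}$ is $\Pi$-scattered; (b) $\Pi$ is $\mathscr{G}$-scattered; (c) there exist $y\in\mathscr{F}$ and a non-decreasing function $h:\kappa\to\kappa$ such that $|h^{-1}(\{\alpha\})|<\kappa$ for every $\alpha<\kappa$, and the family $\{h[y\cap z]:z\in\mathscr{G}\}$ is unreaped.
   Context: For a regular cardinal $\kappa$, an interval partition of $\kappa$ is a family $\Pi=\{I_\alpha:\alpha<\kappa\}$ of pairwise disjoint non-empty intervals $I_\alpha=[\gamma_\alpha,\gamma_{\alpha+1})$ whose union is $\kappa$. A pair $(D,E)$ is a nice $\Pi$-orbit if each of $D$ and $E$ is a union of $\kappa$-many intervals of $\Pi$, no interval of $\Pi$ is contained in both, and no interval of $\Pi$ contained in $D$ is adjacent (i.e. of the form $I_\alpha,I_{\alpha+1}$ in either order) to an interval of $\Pi$ contained in $E$. A family $\mathscr{F}\subseteq[\kappa]^\kappa$ is $\Pi$-scattered if for every nice $\Pi$-orbit $(D,E)$ and every $y\in\mathscr{F}$, $|y\cap D|=|y\cap E|=\kappa$. $\Pi$ is $\mathscr{G}$-scattered if there exists a nice $\Pi$-orbit $(D,E)$ such that $|z\cap D|=|z\cap E|=\kappa$ for every $z\in\mathscr{G}$. A set $S\subseteq\kappa$ splits $B\subseteq\kappa$ if $|S\cap B|=|B\setminus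 S|=\kappa$. A family $\mathcal{A}$ of subsets of $\kappa$ is unreaped (an $\mathfrak{r}_\kappa$-family) if there is no $S\in[\kappa]^\kappa$ which splits every member of $\mathcal{A}$. $h[X]$ denotes the pointwise image $\{h(x):x\in X\}$. *)

theory Defs
  imports Main
begin

unbundle cardinal_syntax

text \<open>A regular infinite cardinal kappa is represented by a cardinal order r on the
  whole type 'k: the elements of 'k are the ordinals below kappa, ordered by r.
  For X a subset of kappa, "|X| = kappa" is  |X| =o r  and "|X| < kappa" is  |X| <o r.\<close>

definition leq_k :: "'k rel \<Rightarrow> 'k \<Rightarrow> 'k \<Rightarrow> bool" where
  "leq_k r a b \<longleftrightarrow> (a, b) \<in> r"

definition less_k :: "'k rel \<Rightarrow> 'k \<Rightarrow> 'k \<Rightarrow> bool" where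
  "less_k r a b \<longleftrightarrow> (a, b) \<in> r \<and> a \<noteq> b"

definition succ_k :: "'k rel \<Rightarrow> 'k \<Rightarrow> 'k" where
  "succ_k r a = wo_rel.suc r {a}"

definition full_size :: "'k rel \<Rightarrow> 'k set \<Rightarrow> bool" where
  "full_size r X \<longleftrightarrow> |X| =o r"

definition interval_k :: "'k rel \<Rightarrow> 'k \<Rightarrow> 'k \<Rightarrow> 'k set" where
  "interval_k r a b = {x. leq_k r a x \<and> less_k r x b}"

definition interval_partition :: "'k rel \<Rightarrow> ('k \<Rightarrow> 'k set) \<Rightarrow> bool" where
  "interval_partition r I \<longleftrightarrow>
     (\<exists>\<gamma>. \<forall>\<alpha>. I \<alpha> = interval_k r (\<gamma> \<alpha>) (\<gamma> (succ_k r \<alpha>))) \<and>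
     (\<forall>\<alpha>. I \<alpha> \<noteq> {}) \<and>
     (\<forall>\<alpha> \<beta>. \<alpha> \<noteq> \<beta> \<longrightarrow> I \<alpha> \<inter> I \<beta> = {}) \<and>
     (\<Union>\<alpha>. I \<alpha>) = UNIV"

definition union_of_kappa_intervals :: "'k rel \<Rightarrow> ('k \<Rightarrow> 'k set) \<Rightarrow> 'k set \<Rightarrow> bool" where
  "union_of_kappa_intervals r I D \<longleftrightarrow> (\<exists>A. |A| =o r \<and> D = (\<Union>\<alpha>\<in>A. I \<alpha>))"

definition nice_orbit :: "'k rel \<Rightarrow> ('k \<Rightarrow> 'k set) \<Rightarrow> 'k set \<Rightarrow> 'k set \<Rightarrow> bool" where
  "nice_orbit r I D E \<longleftrightarrow>
     union_of_kappa_intervals r I D \<and> union_of_kappa_intervals r I E \<and>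
     (\<forall>\<alpha>. \<not> (I \<alpha> \<subseteq> D \<and> I \<alpha> \<subseteq> E)) \<and>
     (\<forall>\<alpha> \<beta>. I \<alpha> \<subseteq> D \<and> I \<beta> \<subseteq> E \<longrightarrow> \<beta> \<noteq> succ_k r \<alpha> \<and> \<alpha> \<noteq> succ_k r \<beta>)"

definition family_scattered :: "'k rel \<Rightarrow> ('k \<Rightarrow> 'k set) \<Rightarrow> 'k set set \<Rightarrow> bool" where
  "family_scattered r I F \<longleftrightarrow>
     (\<forall>D E. nice_orbit r I D E \<longrightarrow> (\<forall>y\<in>F. |y \<inter> D| =o r \<and> |y \<inter> E| =o r))"

definition partition_scattered :: "'k rel \<Rightarrow> ('k \<Rightarrow> 'k set) \<Rightarrow> 'k set set \<Rightarrow> bool" where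
  "partition_scattered r I G \<longleftrightarrow>
     (\<exists>D E. nice_orbit r I D E \<and> (\<forall>z\<in>G. |z \<inter> D| =o r \<and> |z \<inter> E| =o r))"

definition splits :: "'k rel \<Rightarrow> 'k set \<Rightarrow> 'k set \<Rightarrow> bool" where
  "splits r S B \<longleftrightarrow> |S \<inter> B| =o r \<and> |B - S| =o r"

definition unreaped :: "'k rel \<Rightarrow> 'k set set \<Rightarrow> bool" where
  "unreaped r \<A> \<longleftrightarrow> \<not> (\<exists>S. |S| =o r \<and> (\<forall>B\<in>\<A>. splits r S B))"

end

theory Submission
  imports Defs
begin

unbundle cardinal_syntax

text \<open>Suppose (a) fails, witnessed by a nice orbit (D, E) and y \<in> F, and let X be the one of
  D, E with |y \<inter> X| < \<kappa>. Since X is a union of \<kappa> intervals it is unbounded, so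
  h x := min {p \<in> X. x \<le> p} is a non-decreasing retraction onto X with fibres bounded by
  their value. It fixes X, and it is constant on every interval disjoint from X and even on
  every pair of adjacent such intervals. A set S splitting all h[y \<inter> z] therefore sorts
  these gap intervals according to whether their common h-value lies in S; unions of the two
  classes form a nice orbit (D', E'), and since y \<inter> X is small, S \<inter> h[y \<inter> z] and
  h[y \<inter> z] - S are essentially h[z \<inter> D'] and h[z \<inter> E']. If (b) fails as well, some
  z \<in> G meets D' or E' in fewer than \<kappa> points, so S does not split h[y \<inter> z].\<close>

lemma card_order_Field: "card_order r \<Longrightarrow> Field r = UNIV"
  using card_order_on_Card_order by blast

lemma card_order_wo_rel: "card_order r \<Longrightarrow> wo_rel r"
  unfolding wo_rel_def using card_order_on_well_order_on well_order_on_Well_order by blast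

lemma card_order_refl: "card_order r \<Longrightarrow> (a, a) \<in> r"
  using card_order_wo_rel[of r] card_order_Field[of r] wo_rel.REFL[of r]
  unfolding refl_on_def by blast

lemma card_order_trans: "card_order r \<Longrightarrow> (a, b) \<in> r \<Longrightarrow> (b, c) \<in> r \<Longrightarrow> (a, c) \<in> r"
  using card_order_wo_rel[of r] wo_rel.TRANS[of r] unfolding trans_def by blast

lemma card_order_antisym: "card_order r \<Longrightarrow> (a, b) \<in> r \<Longrightarrow> (b, a) \<in> r \<Longrightarrow> a = b"
  using card_order_wo_rel[of r] wo_rel.ANTISYM[of r] unfolding antisym_def by blast

lemma card_order_total: "card_order r \<Longrightarrow> (a, b) \<in> r \<or> (b, a) \<in> r"
  using card_order_wo_rel[of r] wo_rel.TOTALS[of r] card_order_Field[of r] by blast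

lemma card_of_ordLeq_card_order:
  assumes "card_order (r :: 'a rel)"
  shows "|X :: 'a set| \<le>o r"
proof -
  have "|X| \<le>o |Field r|"
    using card_of_mono1[of X "Field r"] card_order_Field[OF assms] by simp
  also have "|Field r| =o r"
    using card_of_Field_ordIso card_order_on_Card_order[OF assms] by blast
  finally show ?thesis .
qed

lemma card_of_ordLess_if_not_ordIso:
  "card_order (r :: 'a rel) \<Longrightarrow> \<not> |X :: 'a set| =o r \<Longrightarrow> |X| <o r"
  using card_of_ordLeq_card_order ordLeq_iff_ordLess_or_ordIso by blast

lemma card_of_subset_ordLess: "X \<subseteq> Y \<Longrightarrow> |Y| <o r \<Longrightarrow> |X| <o r"
  by (rule ordLeq_ordLess_trans[OF card_of_mono1])

lemma card_of_under_ordLess: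
  assumes r: "card_order r" "cinfinite r"
  shows "|under r p| <o r"
proof -
  have Cinf: "Cinfinite r" using card_order_on_Card_order[OF r(1)] r(2) by blast
  have "|underS r p| <o r"
    by (rule card_of_underS) (use card_order_on_Card_order[OF r(1)] in auto)
  moreover have "|{p}| <o r"
  proof (rule finite_ordLess_infinite[OF card_of_Well_order])
    show "Well_order r" using card_order_wo_rel[OF r(1)] unfolding wo_rel_def .
    show "finite (Field |{p}| )" by (simp add: Field_card_of)
    show "\<not> finite (Field r)" using r(2) unfolding cinfinite_def .
  qed
  ultimately have "|underS r p \<union> {p}| <o r"
    by (rule Un_Cinfinite_bound_strict[OF _ _ Cinf])
  moreover have "under r p \<subseteq> underS r p \<union> {p}"
    unfolding under_def underS_def by blast
  ultimately show ?thesis by (blast intro: card_of_subset_ordLess)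
qed

definition convex_k :: "'k rel \<Rightarrow> 'k set \<Rightarrow> bool" where
  "convex_k r C \<longleftrightarrow> (\<forall>x x' w. x \<in> C \<longrightarrow> x' \<in> C \<longrightarrow> (x, w) \<in> r \<longrightarrow> (w, x') \<in> r \<longrightarrow> w \<in> C)"

lemma convex_interval_k:
  assumes r: "card_order r"
  shows "convex_k r (interval_k r a b)"
  unfolding convex_k_def
proof (intro allI impI)
  fix x x' w
  assume "x \<in> interval_k r a b" "x' \<in> interval_k r a b" "(x, w) \<in> r" "(w, x') \<in> r"
  then have "(a, x) \<in> r" "(x', b) \<in> r" "x' \<noteq> b" "(x, w) \<in> r" "(w, x') \<in> r"
    unfolding interval_k_def leq_k_def less_k_def by auto
  then have "(a, w) \<in> r" "(w, b) \<in> r" "w \<noteq> b"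
    by (metis card_order_trans[OF r] card_order_antisym[OF r])+
  then show "w \<in> interval_k r a b"
    unfolding interval_k_def leq_k_def less_k_def by auto
qed

lemma interval_k_Un:
  assumes r: "card_order r" and ab: "(a, b) \<in> r" and bc: "(b, c) \<in> r"
  shows "interval_k r a b \<union> interval_k r b c = interval_k r a c"
proof (intro equalityI subsetI)
  fix x assume "x \<in> interval_k r a b \<union> interval_k r b c"
  then show "x \<in> interval_k r a c"
    unfolding interval_k_def leq_k_def less_k_def
    by (metis (mono_tags, lifting) Un_iff ab bc card_order_antisym[OF r] card_order_trans[OF r] mem_Collect_eq)
next
  fix x assume "x \<in> interval_k r a c"
  then show "x \<in> interval_k r a b \<union> interval_k r b c"
    unfolding interval_k_def leq_k_def less_k_def
    by (metis (mono_tags, lifting) Un_iff card_order_total[OF r] card_order_refl[OF r] mem_Collect_eq)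
qed

text \<open>A junk value unless some element of X lies above x.\<close>
definition next_in :: "'k rel \<Rightarrow> 'k set \<Rightarrow> 'k \<Rightarrow> 'k" where
  "next_in r X x = wo_rel.minim r {p \<in> X. (x, p) \<in> r}"

lemma next_in_in:
  assumes "card_order r" "\<exists>p\<in>X. (x, p) \<in> r"
  shows "next_in r X x \<in> X \<and> (x, next_in r X x) \<in> r"
  using wo_rel.minim_in[OF card_order_wo_rel[OF assms(1)], of "{p \<in> X. (x, p) \<in> r}"]
    assms card_order_Field[OF assms(1)] unfolding next_in_def by auto

lemma next_in_least:
  assumes "card_order r" "p \<in> X" "(x, p) \<in> r"
  shows "(next_in r X x, p) \<in> r"
  using wo_rel.minim_least[OF card_order_wo_rel[OF assms(1)], of "{p \<in> X. (x, p) \<in> r}"]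
    assms card_order_Field[OF assms(1)] unfolding next_in_def by auto

lemma next_in_fixed:
  assumes "card_order r" "x \<in> X"
  shows "next_in r X x = x"
  using assms next_in_in[of r X x] next_in_least[of r x X x]
    card_order_refl[of r x] card_order_antisym[of r] by blast

lemma next_in_mono:
  assumes r: "card_order r" and X: "\<forall>b. \<exists>p\<in>X. (b, p) \<in> r" and "(a, b) \<in> r"
  shows "(next_in r X a, next_in r X b) \<in> r"
  using assms next_in_in[OF r, of X b] next_in_least[OF r] card_order_trans[OF r] by blast

lemma card_of_next_in_vimage:
  assumes r: "card_order r" "cinfinite r" and X: "\<forall>b. \<exists>p\<in>X. (b, p) \<in> r"
  shows "|next_in r X -` {p}| <o r"
proof -
  have "next_in r X -` {p} \<subseteq> under r p"
    using next_in_in[OF r(1)] X unfolding under_def by auto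
  then show ?thesis using card_of_under_ordLess[OF r] by (rule card_of_subset_ordLess)
qed

lemma next_in_eq_on_convex:
  assumes r: "card_order r" and X: "\<forall>b. \<exists>p\<in>X. (b, p) \<in> r"
    and C: "convex_k r C" "C \<inter> X = {}" and "x \<in> C" "x' \<in> C"
  shows "next_in r X x = next_in r X x'"
proof -
  have ordered: "next_in r X x = next_in r X x'" if "x \<in> C" "x' \<in> C" "(x, x') \<in> r" for x x'
  proof -
    have x: "next_in r X x \<in> X" "(x, next_in r X x) \<in> r" using next_in_in[OF r] X by blast+
    have "(x', next_in r X x) \<in> r"
    proof (rule ccontr)
      assume "(x', next_in r X x) \<notin> r"
      then have "(next_in r X x, x') \<in> r" using card_order_total[OF r] by blast
      then have "next_in r X x \<in> C" using C(1) x(2) that unfolding convex_k_def by blast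
      then show False using C(2) x(1) by blast
    qed
    then have "(next_in r X x', next_in r X x) \<in> r" using next_in_least[OF r] x(1) by blast
    moreover have "(next_in r X x, next_in r X x') \<in> r" using next_in_mono[OF r X that(3)] .
    ultimately show ?thesis using card_order_antisym[OF r] by blast
  qed
  show ?thesis using ordered assms(5,6) card_order_total[OF r] by metis
qed

locale kappa_interval_partition =
  fixes r :: "'k rel" and I :: "'k \<Rightarrow> 'k set" and \<gamma> :: "'k \<Rightarrow> 'k"
  assumes card_order: "card_order r" and cinfinite: "cinfinite r"
    and I_eq: "I \<alpha> = interval_k r (\<gamma> \<alpha>) (\<gamma> (succ_k r \<alpha>))"
    and I_nonempty: "I \<alpha> \<noteq> {}"
    and I_disjoint: "\<alpha> \<noteq> \<beta> \<Longrightarrow> I \<alpha> \<inter> I \<beta> = {}"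
    and I_cover: "\<exists>\<alpha>. x \<in> I \<alpha>"
begin

lemma Cinfinite_r: "Cinfinite r"
  using card_order_on_Card_order[OF card_order] cinfinite by blast

lemma left_end_less_succ: "(\<gamma> \<alpha>, \<gamma> (succ_k r \<alpha>)) \<in> r \<and> \<gamma> \<alpha> \<noteq> \<gamma> (succ_k r \<alpha>)"
proof -
  obtain w where "w \<in> I \<alpha>" using I_nonempty by blast
  then have w: "(\<gamma> \<alpha>, w) \<in> r" "(w, \<gamma> (succ_k r \<alpha>)) \<in> r" "w \<noteq> \<gamma> (succ_k r \<alpha>)"
    unfolding I_eq interval_k_def leq_k_def less_k_def by auto
  show ?thesis
  proof
    show "(\<gamma> \<alpha>, \<gamma> (succ_k r \<alpha>)) \<in> r" using card_order_trans[OF card_order w(1,2)] .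
    show "\<gamma> \<alpha> \<noteq> \<gamma> (succ_k r \<alpha>)" using w card_order_antisym[OF card_order] by metis
  qed
qed

lemma left_end_in: "\<gamma> \<alpha> \<in> I \<alpha>"
  using left_end_less_succ card_order_refl[OF card_order]
  unfolding I_eq interval_k_def leq_k_def less_k_def by auto

lemma inj_left_end: "inj \<gamma>"
proof (rule injI)
  fix \<alpha> \<beta> assume "\<gamma> \<alpha> = \<gamma> \<beta>"
  then have "\<gamma> \<alpha> \<in> I \<alpha> \<inter> I \<beta>" by (metis IntI left_end_in)
  then show "\<alpha> = \<beta>" using I_disjoint by auto
qed

lemma index_in_if_subset:
  assumes "I \<alpha> \<subseteq> (\<Union>\<beta>\<in>A. I \<beta>)"
  shows "\<alpha> \<in> A"
proof -
  obtain \<beta> where "\<beta> \<in> A" "\<gamma> \<alpha> \<in> I \<beta>" using assms left_end_in by blast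
  then show ?thesis using I_disjoint[of \<alpha> \<beta>] left_end_in[of \<alpha>] by auto
qed

lemma disjoint_if_not_in_union:
  assumes "union_of_kappa_intervals r I X" "x \<in> I \<alpha>" "x \<notin> X"
  shows "I \<alpha> \<inter> X = {}"
proof -
  obtain A where X: "X = (\<Union>\<beta>\<in>A. I \<beta>)"
    using assms(1) unfolding union_of_kappa_intervals_def by blast
  then have "\<alpha> \<notin> A" using assms(2,3) by blast
  then have "I \<alpha> \<inter> I \<beta> = {}" if "\<beta> \<in> A" for \<beta> using I_disjoint that by metis
  then show ?thesis unfolding X by blast
qed

lemma union_of_kappa_intervals_unbounded:
  assumes "union_of_kappa_intervals r I X"
  shows "\<exists>p\<in>X. (b, p) \<in> r"
proof (rule ccontr)
  obtain A where A: "|A| =o r" "X = (\<Union>\<alpha>\<in>A. I \<alpha>)"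
    using assms unfolding union_of_kappa_intervals_def by blast
  assume bound: "\<not> (\<exists>p\<in>X. (b, p) \<in> r)"
  have "X \<subseteq> under r b"
  proof
    fix x assume "x \<in> X"
    then have "(b, x) \<notin> r" using bound by blast
    then show "x \<in> under r b" using card_order_total[OF card_order, of x b] unfolding under_def by auto
  qed
  then have small: "|X| <o r"
    using card_of_under_ordLess[OF card_order cinfinite] by (rule card_of_subset_ordLess)
  have "inj_on \<gamma> A" using inj_left_end by (rule inj_on_subset) simp
  moreover have "\<gamma> ` A \<subseteq> X" using A(2) left_end_in by blast
  ultimately have "|A| \<le>o |X|" using card_of_ordLeq by blast
  then have "|A| <o r" using small by (rule ordLeq_ordLess_trans)
  then show False using A(1) not_ordLess_ordIso by blast
qed

lemma convex_adjacent: "convex_k r (I \<alpha> \<union> I (succ_k r \<alpha>))"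
proof -
  have "I \<alpha> \<union> I (succ_k r \<alpha>) = interval_k r (\<gamma> \<alpha>) (\<gamma> (succ_k r (succ_k r \<alpha>)))"
    unfolding I_eq
    by (rule interval_k_Un[OF card_order left_end_less_succ[THEN conjunct1] left_end_less_succ[THEN conjunct1]])
  then show ?thesis using convex_interval_k[OF card_order] by simp
qed

lemma next_in_const_on_gap:
  assumes X: "union_of_kappa_intervals r I X" and gap: "I \<alpha> \<inter> X = {}" and x: "x \<in> I \<alpha>"
  shows "next_in r X x = next_in r X (\<gamma> \<alpha>)"
proof (rule next_in_eq_on_convex[OF card_order _ _ gap x left_end_in])
  show "\<forall>b. \<exists>p\<in>X. (b, p) \<in> r" using union_of_kappa_intervals_unbounded[OF X] by blast
  show "convex_k r (I \<alpha>)" unfolding I_eq by (rule convex_interval_k[OF card_order])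
qed

lemma next_in_const_on_adjacent_gaps:
  assumes X: "union_of_kappa_intervals r I X"
    and gaps: "I \<alpha> \<inter> X = {}" "I (succ_k r \<alpha>) \<inter> X = {}"
  shows "next_in r X (\<gamma> \<alpha>) = next_in r X (\<gamma> (succ_k r \<alpha>))"
proof (rule next_in_eq_on_convex[OF card_order _ convex_adjacent])
  show "\<forall>b. \<exists>p\<in>X. (b, p) \<in> r" using union_of_kappa_intervals_unbounded[OF X] by blast
  show "(I \<alpha> \<union> I (succ_k r \<alpha>)) \<inter> X = {}" using gaps by blast
  show "\<gamma> \<alpha> \<in> I \<alpha> \<union> I (succ_k r \<alpha>)" "\<gamma> (succ_k r \<alpha>) \<in> I \<alpha> \<union> I (succ_k r \<alpha>)"
    using left_end_in by blast+
qed

text \<open>On a gap interval next_in r X is constant, so its value at the left end represents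
  the interval.\<close>
definition gap_indices :: "'k set \<Rightarrow> 'k set \<Rightarrow> 'k set" where
  "gap_indices X T = {\<alpha>. I \<alpha> \<inter> X = {} \<and> next_in r X (\<gamma> \<alpha>) \<in> T}"

lemma next_in_image_subset_gaps:
  assumes X: "union_of_kappa_intervals r I X"
  shows "T \<inter> next_in r X ` (y \<inter> z) \<subseteq> (y \<inter> X) \<union> next_in r X ` (z \<inter> (\<Union>\<alpha>\<in>gap_indices X T. I \<alpha>))"
proof
  fix w assume "w \<in> T \<inter> next_in r X ` (y \<inter> z)"
  then obtain x where x: "x \<in> y" "x \<in> z" "w = next_in r X x" "w \<in> T" by blast
  show "w \<in> (y \<inter> X) \<union> next_in r X ` (z \<inter> (\<Union>\<alpha>\<in>gap_indices X T. I \<alpha>))"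
  proof (cases "x \<in> X")
    case True
    then show ?thesis using x next_in_fixed[OF card_order] by auto
  next
    case False
    obtain \<alpha> where \<alpha>: "x \<in> I \<alpha>" using I_cover by blast
    then have gap: "I \<alpha> \<inter> X = {}" using disjoint_if_not_in_union[OF X] False by blast
    then have "next_in r X x = next_in r X (\<gamma> \<alpha>)" using next_in_const_on_gap[OF X _ \<alpha>] by blast
    then have "\<alpha> \<in> gap_indices X T" using gap x unfolding gap_indices_def by auto
    then show ?thesis using x \<alpha> by blast
  qed
qed

lemma next_in_image_gap_union:
  assumes X: "union_of_kappa_intervals r I X"
  shows "next_in r X ` (\<Union>\<alpha>\<in>gap_indices X T. I \<alpha>) \<subseteq> (\<lambda>\<alpha>. next_in r X (\<gamma> \<alpha>)) ` gap_indices X T"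
  using next_in_const_on_gap[OF X] unfolding gap_indices_def by blast

lemma card_of_trace_ordLess:
  assumes X: "union_of_kappa_intervals r I X" and y: "|y \<inter> X| <o r"
    and small: "|z \<inter> (\<Union>\<alpha>\<in>gap_indices X T. I \<alpha>)| <o r \<or> |gap_indices X T| <o r"
  shows "|T \<inter> next_in r X ` (y \<inter> z)| <o r"
proof -
  have "|next_in r X ` (z \<inter> (\<Union>\<alpha>\<in>gap_indices X T. I \<alpha>))| <o r"
    using small
  proof
    assume "|z \<inter> (\<Union>\<alpha>\<in>gap_indices X T. I \<alpha>)| <o r"
    then show ?thesis by (rule ordLeq_ordLess_trans[OF card_of_image])
  next
    assume "|gap_indices X T| <o r"
    then have "|(\<lambda>\<alpha>. next_in r X (\<gamma> \<alpha>)) ` gap_indices X T| <o r"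
      by (rule ordLeq_ordLess_trans[OF card_of_image])
    moreover have "next_in r X ` (z \<inter> (\<Union>\<alpha>\<in>gap_indices X T. I \<alpha>))
        \<subseteq> (\<lambda>\<alpha>. next_in r X (\<gamma> \<alpha>)) ` gap_indices X T"
      using next_in_image_gap_union[OF X] by blast
    ultimately show ?thesis by (blast intro: card_of_subset_ordLess)
  qed
  with y have "|(y \<inter> X) \<union> next_in r X ` (z \<inter> (\<Union>\<alpha>\<in>gap_indices X T. I \<alpha>))| <o r"
    by (rule Un_Cinfinite_bound_strict[OF _ _ Cinfinite_r])
  with next_in_image_subset_gaps[OF X] show ?thesis by (rule card_of_subset_ordLess)
qed

lemma gap_indices_not_adjacent:
  assumes X: "union_of_kappa_intervals r I X"
    and \<alpha>: "\<alpha> \<in> gap_indices X T" and \<beta>: "\<beta> \<in> gap_indices X (- T)"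
  shows "\<beta> \<noteq> succ_k r \<alpha>"
proof
  assume succ: "\<beta> = succ_k r \<alpha>"
  have "I \<alpha> \<inter> X = {}" "I (succ_k r \<alpha>) \<inter> X = {}"
    using \<alpha> \<beta> unfolding succ gap_indices_def by simp_all
  then have "next_in r X (\<gamma> \<alpha>) = next_in r X (\<gamma> \<beta>)"
    unfolding succ by (rule next_in_const_on_adjacent_gaps[OF X])
  then show False using \<alpha> \<beta> unfolding gap_indices_def by simp
qed

lemma nice_orbit_gap_unions:
  assumes X: "union_of_kappa_intervals r I X"
    and big: "|gap_indices X T| =o r" "|gap_indices X (- T)| =o r"
  shows "nice_orbit r I (\<Union>\<alpha>\<in>gap_indices X T. I \<alpha>) (\<Union>\<alpha>\<in>gap_indices X (- T). I \<alpha>)"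
  unfolding nice_orbit_def
proof (intro conjI allI impI)
  show "union_of_kappa_intervals r I (\<Union>\<alpha>\<in>gap_indices X T. I \<alpha>)"
    "union_of_kappa_intervals r I (\<Union>\<alpha>\<in>gap_indices X (- T). I \<alpha>)"
    unfolding union_of_kappa_intervals_def using big by blast+
next
  fix \<alpha>
  show "\<not> (I \<alpha> \<subseteq> (\<Union>\<alpha>\<in>gap_indices X T. I \<alpha>) \<and> I \<alpha> \<subseteq> (\<Union>\<alpha>\<in>gap_indices X (- T). I \<alpha>))"
  proof
    assume "I \<alpha> \<subseteq> (\<Union>\<alpha>\<in>gap_indices X T. I \<alpha>) \<and> I \<alpha> \<subseteq> (\<Union>\<alpha>\<in>gap_indices X (- T). I \<alpha>)"
    then have "\<alpha> \<in> gap_indices X T" "\<alpha> \<in> gap_indices X (- T)"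
      using index_in_if_subset by simp_all
    then show False unfolding gap_indices_def by simp
  qed
next
  fix \<alpha> \<beta>
  assume "I \<alpha> \<subseteq> (\<Union>\<alpha>\<in>gap_indices X T. I \<alpha>) \<and> I \<beta> \<subseteq> (\<Union>\<alpha>\<in>gap_indices X (- T). I \<alpha>)"
  then have \<alpha>: "\<alpha> \<in> gap_indices X T" and \<beta>: "\<beta> \<in> gap_indices X (- T)"
    using index_in_if_subset by simp_all
  show "\<beta> \<noteq> succ_k r \<alpha>" using gap_indices_not_adjacent[OF X \<alpha> \<beta>] .
  have "\<alpha> \<in> gap_indices X (- (- T))" using \<alpha> by simp
  then show "\<alpha> \<noteq> succ_k r \<beta>" using gap_indices_not_adjacent[OF X \<beta>] by blast
qed

lemma unreaped_next_in_images:
  assumes X: "union_of_kappa_intervals r I X" and y: "|y \<inter> X| <o r"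
    and "G \<noteq> {}" and not_scattered: "\<not> partition_scattered r I G"
  shows "unreaped r ((\<lambda>z. next_in r X ` (y \<inter> z)) ` G)"
  unfolding unreaped_def
proof
  assume "\<exists>S. |S| =o r \<and> (\<forall>B\<in>(\<lambda>z. next_in r X ` (y \<inter> z)) ` G. splits r S B)"
  then obtain S where "\<forall>z\<in>G. splits r S (next_in r X ` (y \<inter> z))" by blast
  then have split: "\<not> |T \<inter> next_in r X ` (y \<inter> z)| <o r" if "z \<in> G" "T = S \<or> T = - S" for z T
  proof -
    have "next_in r X ` (y \<inter> z) - S = - S \<inter> next_in r X ` (y \<inter> z)" by blast
    then show ?thesis
      using that \<open>\<forall>z\<in>G. splits r S (next_in r X ` (y \<inter> z))\<close> not_ordLess_ordIso
      unfolding splits_def by metis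
  qed
  have big: "|gap_indices X T| =o r" if T: "T = S \<or> T = - S" for T
  proof (rule ccontr)
    obtain z where z: "z \<in> G" using \<open>G \<noteq> {}\<close> by blast
    assume "\<not> |gap_indices X T| =o r"
    then have "|gap_indices X T| <o r" by (rule card_of_ordLess_if_not_ordIso[OF card_order])
    then have "|T \<inter> next_in r X ` (y \<inter> z)| <o r" using card_of_trace_ordLess[OF X y] by blast
    then show False using split[OF z T] by blast
  qed
  have "nice_orbit r I (\<Union>\<alpha>\<in>gap_indices X S. I \<alpha>) (\<Union>\<alpha>\<in>gap_indices X (- S). I \<alpha>)"
    using nice_orbit_gap_unions[OF X big big] by blast
  then obtain z where z: "z \<in> G"
    and "\<not> ( |z \<inter> (\<Union>\<alpha>\<in>gap_indices X S. I \<alpha>)| =o r \<and> |z \<inter> (\<Union>\<alpha>\<in>gap_indices X (- S). I \<alpha>)| =o r)"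
    using not_scattered unfolding partition_scattered_def by blast
  then obtain T where T: "T = S \<or> T = - S" and "\<not> |z \<inter> (\<Union>\<alpha>\<in>gap_indices X T. I \<alpha>)| =o r"
    by blast
  then have "|z \<inter> (\<Union>\<alpha>\<in>gap_indices X T. I \<alpha>)| <o r"
    by (blast intro: card_of_ordLess_if_not_ordIso[OF card_order])
  then have "|T \<inter> next_in r X ` (y \<inter> z)| <o r" using card_of_trace_ordLess[OF X y] by blast
  then show False using split[OF z T] by blast
qed

end

theorem theorem2p6:
  fixes r :: "'k rel" and F G :: "'k set set" and I :: "'k \<Rightarrow> 'k set"
  assumes kappa: "card_order r" "cinfinite r" "regularCard r"
    and F: "\<forall>y\<in>F. full_size r y"
    and G: "\<forall>z\<in>G. full_size r z"
    and Pi: "interval_partition r I"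
  shows "family_scattered r I F \<or> partition_scattered r I G \<or>
         (\<exists>y\<in>F. \<exists>h :: 'k \<Rightarrow> 'k.
            (\<forall>\<alpha> \<beta>. leq_k r \<alpha> \<beta> \<longrightarrow> leq_k r (h \<alpha>) (h \<beta>)) \<and>
            (\<forall>\<alpha>. |h -` {\<alpha>}| <o r) \<and>
            unreaped r ((\<lambda>z. h ` (y \<inter> z)) ` G))"
proof (rule disjCI)
  assume not_bc: "\<not> (partition_scattered r I G \<or>
         (\<exists>y\<in>F. \<exists>h :: 'k \<Rightarrow> 'k.
            (\<forall>\<alpha> \<beta>. leq_k r \<alpha> \<beta> \<longrightarrow> leq_k r (h \<alpha>) (h \<beta>)) \<and>
            (\<forall>\<alpha>. |h -` {\<alpha>}| <o r) \<and>
            unreaped r ((\<lambda>z. h ` (y \<inter> z)) ` G)))"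
  obtain \<gamma> where "\<And>\<alpha>. I \<alpha> = interval_k r (\<gamma> \<alpha>) (\<gamma> (succ_k r \<alpha>))"
    using Pi unfolding interval_partition_def by blast
  then interpret kappa_interval_partition r I \<gamma>
    using kappa(1,2) Pi unfolding interval_partition_def by unfold_locales blast+
  show "family_scattered r I F"
    unfolding family_scattered_def
  proof (intro allI impI ballI)
    fix D E y assume nice: "nice_orbit r I D E" and "y \<in> F"
    have "G \<noteq> {}" using nice not_bc unfolding partition_scattered_def by blast
    show "|y \<inter> D| =o r \<and> |y \<inter> E| =o r"
    proof (rule ccontr)
      assume "\<not> ( |y \<inter> D| =o r \<and> |y \<inter> E| =o r)"
      then obtain X where X: "union_of_kappa_intervals r I X" "|y \<inter> X| <o r"
        using nice card_of_ordLess_if_not_ordIso[OF kappa(1)] unfolding nice_orbit_def by blast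
      have "\<forall>b. \<exists>p\<in>X. (b, p) \<in> r" using union_of_kappa_intervals_unbounded[OF X(1)] by blast
      then have "\<forall>\<alpha> \<beta>. leq_k r \<alpha> \<beta> \<longrightarrow> leq_k r (next_in r X \<alpha>) (next_in r X \<beta>)"
          and "\<forall>\<alpha>. |next_in r X -` {\<alpha>}| <o r"
        using next_in_mono[OF kappa(1)] card_of_next_in_vimage[OF kappa(1,2)] unfolding leq_k_def by blast+
      with unreaped_next_in_images[OF X \<open>G \<noteq> {}\<close>] not_bc \<open>y \<in> F\<close> show False by blast
    qed
  qed
qed

end
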